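(* Let $I$ be a non-empty finite set of positive integers, let $\lambda=\lambda^I$, let $s=\lambda_1-1$, and let $(C_0,C_1,\ldots,C_s)$ be the Naruse-Newton coefficients of $I$. If for some positive integer $i\le s$ it holds that $\lambda'_{i+1}=\lambda'_{s+1}=2$, then $$\frac{C_0}{0!}=\frac{C_1}{1!}=\cdots=\frac{C_{s-i+1}}{(s-i+1)!}.$$
   Context: Partitions are drawn as Young diagrams $\mathbb{D}(\lambda)$ in English notation; $c_{i,j}$ is the cell in row $i$ and column $j$; $\lambda'$ is the conjugate partition ($\lambda'_j$ is the number of cells in column $j$). The hook length $h_\lambda(c)$ of a cell $c$ is the number of cells of $\mathbb{D}(\lambda)$ weakly to the right of $c$ in its row or weakly below $c$ in its column (counting $c$ once). For partitions $\mu\subseteq\lambda$, an excited diagram of $\lambda/\mu$ is any subset of $\mathbb{D}(\lambda)$ obtained from $\mathbb{D}(\mu)$ by repeatedly applying the move: replace a cell $c_{i,j}\in D$ by $c_{i+1,j+1}$, allowed iff $c_{i+1,j+1}\in\mathbb{D}(\lambda)$ and none of $c_{i,j+1},c_{i+1,j},c_{i+1,j+1}$ lies in $D$; $\mathbb{E}(\lambda/\mu)$ denotes the set of excited diagrams. Ribbons and descent sets: a ribbon with $n$ cells is read from its lower-left cell to its upper-right cell, each successive cell being directly to the right of or directly above the previous one; it corresponds to the set of $i\in\{1,\ldots,n-1\}$ such that cell $i$ is directly below cell $i+1$ (this is the common descent set of all permutations read off from its standard fillings). For a non-empty finite set $I$ of positive integers, $\lambda^I$ is the unique partition with $\lambda^I_1=\lambda^I_2$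 such that the set of cells $c_{i,j}\in\mathbb{D}(\lambda^I)$ having fewer than three of $c_{i,j+1},c_{i+1,j},c_{i+1,j+1}$ in $\mathbb{D}(\lambda^I)$ is a ribbon (of $\max I+1$ cells) corresponding to $I$; this ribbon equals $\mathbb{D}(\lambda^I)\setminus\mathbb{D}(\mu^I)$ for a partition $\mu^I$. Put $s=s(I)=\lambda^I_1-1$. Naruse-Newton coefficients: every excited diagram $D$ of $\lambda^I/\mu^I$ meets the first row in a set $\{c_{1,1},\ldots,c_{1,r}\}$ with $0\le r\le s$. For $0\le j\le s$, $$C_j=C_j(I)=\sum_{D}\ \prod_{c\in D,\ c\text{ not in row }1} h_{\lambda^I}(c),$$ the sum over all $D\in\mathbb{E}(\lambda^I/\mu^I)$ having exactly $s-j$ cells in the first row. (These are the coefficients of the excitation factor of the ribbon in the Naruse-Newton basis.) Example: $I=\{1,3,5\}$ gives $\lambda^I=(3,3,2,1)$, $s=2$, $(C_0,C_1,C_2)=(6,6,3)$. *)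

theory Defs
  imports Complex_Main
begin

text \<open>Partitions are lists of positive integers, weakly decreasing.
  Cells are pairs (row, column), both 1-indexed (English notation).\<close>

definition is_partition :: "nat list \<Rightarrow> bool" where
  "is_partition lam \<longleftrightarrow> sorted_wrt (\<ge>) lam \<and> 0 \<notin> set lam"

definition diagram :: "nat list \<Rightarrow> (nat \<times> nat) set" where
  "diagram lam = {(i, j). 1 \<le> i \<and> i \<le> length lam \<and> 1 \<le> j \<and> j \<le> lam ! (i - 1)}"

definition conj_part :: "nat list \<Rightarrow> nat \<Rightarrow> nat" where
  "conj_part lam j = card {i. (i, j) \<in> diagram lam}"

definition hook :: "nat list \<Rightarrow> nat \<times> nat \<Rightarrow> nat" where
  "hook lam c = card {(a, b) \<in> diagram lam.
       (a = fst c \<and> b \<ge> snd c) \<or> (b = snd c \<and> a \<ge> fst c)}"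

definition excite_step :: "nat list \<Rightarrow> (nat \<times> nat) set \<Rightarrow> (nat \<times> nat) set \<Rightarrow> bool" where
  "excite_step lam D D' \<longleftrightarrow>
     (\<exists>i j. (i, j) \<in> D \<and> (i + 1, j + 1) \<in> diagram lam \<and>
            (i, j + 1) \<notin> D \<and> (i + 1, j) \<notin> D \<and> (i + 1, j + 1) \<notin> D \<and>
            D' = insert (i + 1, j + 1) (D - {(i, j)}))"

definition excited :: "nat list \<Rightarrow> nat list \<Rightarrow> (nat \<times> nat) set set" where
  "excited lam mu = {D. (excite_step lam)\<^sup>*\<^sup>* (diagram mu) D}"

definition border_cells :: "nat list \<Rightarrow> (nat \<times> nat) set" where
  "border_cells lam = {(i, j) \<in> diagram lam.
       card ({(i, j + 1), (i + 1, j), (i + 1, j + 1)} \<inter> diagram lam) < 3}"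

text \<open>R is a ribbon with n cells corresponding to the set I: its cells, read from
  the lower-left to the upper-right, are c 1, ..., c n, each successive cell directly
  to the right of or directly above the previous one, and k is in I iff cell k is
  directly below cell k+1.\<close>
definition ribbon_of :: "nat set \<Rightarrow> nat \<Rightarrow> (nat \<times> nat) set \<Rightarrow> bool" where
  "ribbon_of I n R \<longleftrightarrow>
     (\<exists>c :: nat \<Rightarrow> nat \<times> nat. bij_betw c {1..n} R \<and>
        (\<forall>k \<in> {1..<n}.
           (k \<in> I \<longrightarrow> fst (c k) \<ge> 1 \<and> c (k + 1) = (fst (c k) - 1, snd (c k))) \<and>
           (k \<notin> I \<longrightarrow> c (k + 1) = (fst (c k), snd (c k) + 1))))"

definition is_lambda_I :: "nat set \<Rightarrow> nat list \<Rightarrow> bool" where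
  "is_lambda_I I lam \<longleftrightarrow> is_partition lam \<and> length lam \<ge> 2 \<and> lam ! 0 = lam ! 1 \<and>
      ribbon_of I (Max I + 1) (border_cells lam)"

definition NN_coeff :: "nat list \<Rightarrow> nat list \<Rightarrow> nat \<Rightarrow> nat" where
  "NN_coeff lam mu j =
     (\<Sum>D \<in> {D \<in> excited lam mu. card {c \<in> D. fst c = 1} = (lam ! 0 - 1) - j}.
        \<Prod>c \<in> {c \<in> D. fst c \<noteq> 1}. hook lam c)"

end

(* Column i + 1 of lam has only two cells, so every row of lam below the second lies in the
   first i columns. Hence mu is the first s cells of row 1 together with a lower part whose
   row-2 cells lie left of column i, and an excitation either moves a cell of the lower part or
   moves the last cell of row 1 straight down into row 2, where it is stuck. An excited diagram
   with s - j >= i - 1 cells in row 1 is therefore top_part j together with an arbitrary excited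
   diagram E of the lower part. The row-2 cells of top_part j have hooks 1, ..., j, so
   C_j = j! * (sum over E of the hook product of E), a sum that does not depend on j. *)
theory Submission
  imports Defs
begin

lemma mem_diagram_iff [simp]:
  "(a, b) \<in> diagram l \<longleftrightarrow> 1 \<le> a \<and> a \<le> length l \<and> 1 \<le> b \<and> b \<le> l ! (a - 1)"
  by (simp add: diagram_def)

lemma finite_diagram: "finite (diagram l)"
proof -
  have "b \<le> sum_list l" if "(a, b) \<in> diagram l" for a b
  proof -
    have "l ! (a - 1) \<le> sum_list l"
      using that by (intro elem_le_sum_list) auto
    then show ?thesis
      using that by simp
  qed
  then have "diagram l \<subseteq> {1..length l} \<times> {1..sum_list l}"
    by auto
  then show ?thesis
    by (rule finite_subset) simp
qed

lemma partition_nth_antimono: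
  "is_partition l \<Longrightarrow> a \<le> a' \<Longrightarrow> a' < length l \<Longrightarrow> l ! a' \<le> l ! a"
  unfolding is_partition_def by (metis le_eq_less_or_eq order_refl sorted_wrt_nth_less)

lemma partition_nth_pos: "is_partition l \<Longrightarrow> a < length l \<Longrightarrow> 0 < l ! a"
  unfolding is_partition_def by (metis gr0I nth_mem)

lemma row_le_conj_part:
  assumes "is_partition l" and "(r, j) \<in> diagram l"
  shows "r \<le> conj_part l j"
proof -
  have "finite {a. (a, j) \<in> diagram l}"
    by (rule finite_subset[of _ "{1..length l}"]) auto
  moreover have "(a, j) \<in> diagram l" if "a \<in> {1..r}" for a
  proof -
    have "l ! (r - 1) \<le> l ! (a - 1)"
      using assms that by (intro partition_nth_antimono) auto
    then show ?thesis
      using assms that by auto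
  qed
  then have "{1..r} \<subseteq> {a. (a, j) \<in> diagram l}"
    by blast
  ultimately have "card {1..r} \<le> card {a. (a, j) \<in> diagram l}"
    by (rule card_mono)
  then show ?thesis
    unfolding conj_part_def by simp
qed

lemma mem_border_cells_iff:
  "(a, b) \<in> border_cells l \<longleftrightarrow>
     (a, b) \<in> diagram l \<and> \<not> {(a, b + 1), (a + 1, b), (a + 1, b + 1)} \<subseteq> diagram l"
proof -
  let ?N = "{(a, b + 1), (a + 1, b), (a + 1, b + 1)}"
  have N: "finite ?N" "card ?N = 3"
    by simp_all
  have "card (?N \<inter> diagram l) < card ?N \<longleftrightarrow> ?N \<inter> diagram l \<noteq> ?N"
    using card_subset_eq[OF N(1), of "?N \<inter> diagram l"] card_mono[OF N(1), of "?N \<inter> diagram l"]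
    by (metis Int_lower1 order_less_le)
  also have "\<dots> \<longleftrightarrow> \<not> ?N \<subseteq> diagram l"
    by blast
  finally show ?thesis
    unfolding border_cells_def N(2) by (simp del: mem_diagram_iff)
qed

text \<open>If a cell of \<open>mu\<close> lay outside \<open>lam\<close>, the last cell of its row in \<open>lam\<close>, or the first cell
  of the last row of \<open>lam\<close>, would be a border cell of \<open>lam\<close> inside \<open>mu\<close>.\<close>
lemma diagram_eq_diff_border_cells:
  assumes lam: "is_partition lam" "lam \<noteq> []" and mu: "is_partition mu"
    and border: "diagram lam - diagram mu = border_cells lam"
  shows "diagram mu = diagram lam - border_cells lam"
proof -
  have no_border: "c \<notin> diagram mu" if "c \<in> border_cells lam" for c
    using border that by blast
  have "x \<in> diagram lam" if x_mu: "x \<in> diagram mu" for x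
  proof (rule ccontr)
    assume x_lam: "x \<notin> diagram lam"
    obtain a b where x: "x = (a, b)" by fastforce
    consider "a \<le> length lam" | "length lam < a" by linarith
    then show False
    proof cases
      case 1
      let ?m = "lam ! (a - 1)"
      have "a - 1 < length lam" using 1 x x_mu by auto
      then have "0 < ?m" using partition_nth_pos[OF lam(1)] by blast
      then have "(a, ?m) \<in> border_cells lam" "(a, ?m) \<in> diagram mu"
        using 1 x x_mu x_lam by (auto simp: mem_border_cells_iff)
      then show False using no_border by blast
    next
      case 2
      let ?n = "length lam"
      have "mu ! (a - 1) \<le> mu ! (?n - 1)"
        using 2 x x_mu by (intro partition_nth_antimono[OF mu]) auto
      then have "(?n, 1) \<in> border_cells lam" "(?n, 1) \<in> diagram mu"
        using 2 x x_mu lam partition_nth_pos[OF lam(1), of "?n - 1"]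
        by (auto simp: mem_border_cells_iff Suc_le_eq)
      then show False using no_border by blast
    qed
  qed
  then show ?thesis
    using border by blast
qed

lemma prod_reflect_eq_fact:
  assumes "j \<le> n"
  shows "(\<Prod>b = n - j + 1..n. n + 1 - b) = (fact j :: nat)"
proof -
  have "(\<Prod>b = n - j + 1..n. n + 1 - b) = (\<Prod>m = 1..j. m)"
    by (rule prod.reindex_bij_witness[of _ "\<lambda>m. n + 1 - m" "\<lambda>b. n + 1 - b"])
      (use assms in auto)
  then show ?thesis
    by (simp add: fact_prod)
qed

lemma excite_stepI:
  assumes "(a, b) \<in> D" and "(a + 1, b + 1) \<in> diagram lam"
    and "(a, b + 1) \<notin> D" and "(a + 1, b) \<notin> D" and "(a + 1, b + 1) \<notin> D"
  shows "excite_step lam D (insert (a + 1, b + 1) (D - {(a, b)}))"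
  using assms unfolding excite_step_def by blast

lemma excite_stepE:
  assumes "excite_step lam D D'"
  obtains a b where "(a, b) \<in> D" and "(a + 1, b + 1) \<in> diagram lam"
    and "(a, b + 1) \<notin> D" and "(a + 1, b) \<notin> D" and "(a + 1, b + 1) \<notin> D"
    and "D' = insert (a + 1, b + 1) (D - {(a, b)})"
  using assms unfolding excite_step_def by blast

lemma excite_step_subset_diagram:
  "excite_step lam D D' \<Longrightarrow> D \<subseteq> diagram lam \<Longrightarrow> D' \<subseteq> diagram lam"
  unfolding excite_step_def by blast

lemma excite_step_first_row_card_le:
  assumes "excite_step lam D D'" and "D \<subseteq> diagram lam"
  shows "card {c \<in> D'. fst c = 1} \<le> card {c \<in> D. fst c = 1}"
proof -
  obtain a b where "(a, b) \<in> D" and D': "D' = insert (a + 1, b + 1) (D - {(a, b)})"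
    using assms(1) by (blast elim: excite_stepE)
  then have "(a, b) \<in> diagram lam"
    using assms(2) by blast
  then have "{c \<in> D'. fst c = 1} \<subseteq> {c \<in> D. fst c = 1}"
    using D' by auto
  moreover have "finite {c \<in> D. fst c = 1}"
    using finite_subset[OF assms(2) finite_diagram] by simp
  ultimately show ?thesis
    by (intro card_mono)
qed

lemma excited_subset_diagram:
  assumes "diagram mu \<subseteq> diagram lam" and "D \<in> excited lam mu"
  shows "D \<subseteq> diagram lam"
  using assms(2) unfolding excited_def mem_Collect_eq
  by (induction rule: rtranclp_induct) (use assms(1) excite_step_subset_diagram in metis)+

locale two_row_head =
  fixes lam mu :: "nat list" and s i :: nat
  assumes partition: "is_partition lam"
    and length_ge_2: "2 \<le> length lam"
    and first_row_length: "lam ! 0 = s + 1"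
    and second_row_length: "lam ! 1 = s + 1"
    and i_pos: "1 \<le> i" and i_le_s: "i \<le> s"
    and column_short: "conj_part lam (i + 1) \<le> 2"
    and mu_diagram: "diagram mu = diagram lam - border_cells lam"
begin

lemma first_row_cell: "(1, b) \<in> diagram lam \<longleftrightarrow> 1 \<le> b \<and> b \<le> s + 1"
  using length_ge_2 first_row_length by auto

lemma second_row_cell: "(2, b) \<in> diagram lam \<longleftrightarrow> 1 \<le> b \<and> b \<le> s + 1"
  using length_ge_2 second_row_length by auto

lemma lower_cell_column:
  assumes "(a, b) \<in> diagram lam" and "3 \<le> a"
  shows "b \<le> i"
proof (rule ccontr)
  assume "\<not> b \<le> i"
  then have "(a, i + 1) \<in> diagram lam"
    using assms(1) by auto
  then have "a \<le> conj_part lam (i + 1)"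
    by (rule row_le_conj_part[OF partition])
  then show False
    using column_short assms(2) by linarith
qed

text \<open>The first row of \<open>mu\<close> after its last \<open>k\<close> cells have been excited, one after another,
  into the second row.\<close>
definition top_part :: "nat \<Rightarrow> (nat \<times> nat) set" where
  "top_part k = {1} \<times> {1..s - k} \<union> {2} \<times> {s - k + 2..s + 1}"

definition lower_region :: "(nat \<times> nat) set" where
  "lower_region = {(a, b) \<in> diagram lam. 3 \<le> a \<or> (a = 2 \<and> b < i)}"

definition lower_mu :: "(nat \<times> nat) set" where
  "lower_mu = {c \<in> diagram mu. 2 \<le> fst c}"

definition lower_excited :: "(nat \<times> nat) set set" where
  "lower_excited = {E. (excite_step lam)\<^sup>*\<^sup>* lower_mu E}"

lemma diagram_mu_subset: "diagram mu \<subseteq> diagram lam"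
  using mu_diagram by blast

lemma diagram_mu_split: "diagram mu = top_part 0 \<union> lower_mu"
proof -
  have "(1, b) \<in> diagram mu \<longleftrightarrow> 1 \<le> b \<and> b \<le> s" for b
    using first_row_cell[of b] first_row_cell[of "b + 1"] second_row_cell[of b]
      second_row_cell[of "b + 1"]
    by (auto simp: mu_diagram mem_border_cells_iff numeral_2_eq_2 simp del: mem_diagram_iff)
  moreover have "1 \<le> fst c" if "c \<in> diagram mu" for c
    using that by (cases c) simp
  ultimately show ?thesis
    unfolding top_part_def lower_mu_def by force
qed

lemma lower_mu_subset: "lower_mu \<subseteq> lower_region"
proof
  fix c assume c: "c \<in> lower_mu"
  obtain a b where ab: "c = (a, b)" by fastforce
  have "b < i" if "a = 2"
  proof (rule ccontr)
    assume "\<not> b < i"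
    then have "(a + 1, b + 1) \<notin> diagram lam"
      using lower_cell_column[of "a + 1" "b + 1"] that by auto
    then show False
      using c ab by (auto simp: lower_mu_def mu_diagram mem_border_cells_iff)
  qed
  then show "c \<in> lower_region"
    using c ab by (auto simp: lower_mu_def lower_region_def mu_diagram)
qed

lemma excite_step_lower_region:
  assumes "E \<subseteq> lower_region" and "excite_step lam E E'"
  shows "E' \<subseteq> lower_region"
proof -
  obtain a b where "(a, b) \<in> E" "(a + 1, b + 1) \<in> diagram lam"
    and E': "E' = insert (a + 1, b + 1) (E - {(a, b)})"
    using assms(2) by (blast elim: excite_stepE)
  moreover from this have "(a, b) \<in> lower_region"
    using assms(1) by blast
  ultimately have "(a + 1, b + 1) \<in> lower_region"
    by (auto simp: lower_region_def)
  then show ?thesis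
    using assms(1) E' by blast
qed

lemma finite_lower_region: "finite lower_region"
  by (rule finite_subset[OF _ finite_diagram]) (auto simp: lower_region_def)

lemma lower_excited_subset: "E \<in> lower_excited \<Longrightarrow> E \<subseteq> lower_region"
  unfolding lower_excited_def mem_Collect_eq
  by (induction rule: rtranclp_induct) (use lower_mu_subset excite_step_lower_region in metis)+

lemma top_part_disjoint: "k \<le> s - i + 1 \<Longrightarrow> top_part k \<inter> lower_region = {}"
  using i_le_s unfolding top_part_def lower_region_def by auto

lemma card_first_row_top_part:
  assumes "E \<subseteq> lower_region"
  shows "card {c \<in> top_part k \<union> E. fst c = 1} = s - k"
proof -
  have "{c \<in> top_part k \<union> E. fst c = 1} = {1} \<times> {1..s - k}"
    using assms unfolding top_part_def lower_region_def by auto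
  then show ?thesis
    by (simp add: card_cartesian_product)
qed

lemma top_part_Suc: "k < s \<Longrightarrow> top_part (Suc k) = insert (2, s - k + 1) (top_part k - {(1, s - k)})"
  unfolding top_part_def by auto

lemma excite_step_top_part_Suc:
  assumes "k < s - i + 1" and "E \<subseteq> lower_region"
  shows "excite_step lam (top_part k \<union> E) (top_part (Suc k) \<union> E)"
proof -
  have k: "k < s" "i \<le> s - k"
    using assms(1) i_pos i_le_s by arith+
  let ?D = "top_part k \<union> E"
  have "(1, s - k) \<notin> E"
    using assms(2) by (auto simp: lower_region_def)
  then have D': "insert (1 + 1, s - k + 1) (?D - {(1, s - k)}) = top_part (Suc k) \<union> E"
    using top_part_Suc[OF k(1)] by auto
  have "excite_step lam ?D (insert (1 + 1, s - k + 1) (?D - {(1, s - k)}))"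
    using k assms(2) second_row_cell[of "s - k + 1"]
    by (intro excite_stepI) (auto simp: top_part_def lower_region_def)
  then show ?thesis
    by (simp only: D')
qed

lemma excite_step_top_part_lift:
  assumes "k \<le> s - i + 1" and "E \<subseteq> lower_region" and "excite_step lam E E'"
  shows "excite_step lam (top_part k \<union> E) (top_part k \<union> E')"
proof -
  obtain a b where ab: "(a, b) \<in> E" "(a + 1, b + 1) \<in> diagram lam"
    "(a, b + 1) \<notin> E" "(a + 1, b) \<notin> E" "(a + 1, b + 1) \<notin> E"
    and E': "E' = insert (a + 1, b + 1) (E - {(a, b)})"
    using assms(3) by (rule excite_stepE)
  have "(a, b) \<notin> top_part k"
    using top_part_disjoint[OF assms(1)] assms(2) ab(1) by blast
  moreover have "(a, b + 1) \<notin> top_part k" "(a + 1, b) \<notin> top_part k" "(a + 1, b + 1) \<notin> top_part k"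
    using ab(1) assms(1,2) i_le_s by (auto simp: top_part_def lower_region_def)
  ultimately show ?thesis
    using excite_stepI[of a b "top_part k \<union> E"] ab E' by (simp add: insert_Diff_if Un_Diff)
qed

text \<open>A row-2 cell of \<open>top_part k\<close> cannot move, as there is no row-3 cell to its lower right.\<close>
lemma excite_step_from_top_part:
  assumes "k \<le> s - i + 1" and "E \<subseteq> lower_region" and "excite_step lam (top_part k \<union> E) D'"
  shows "(\<exists>E'. excite_step lam E E' \<and> D' = top_part k \<union> E') \<or> (k < s \<and> D' = top_part (Suc k) \<union> E)"
proof -
  let ?D = "top_part k \<union> E"
  obtain a b where ab: "(a, b) \<in> ?D" "(a + 1, b + 1) \<in> diagram lam"
    "(a, b + 1) \<notin> ?D" "(a + 1, b) \<notin> ?D" "(a + 1, b + 1) \<notin> ?D"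
    and D': "D' = insert (a + 1, b + 1) (?D - {(a, b)})"
    using assms(3) by (rule excite_stepE)
  consider (lower) "(a, b) \<in> E" | (row1) "a = 1" "(a, b) \<in> top_part k"
    | (row2) "a = 2" "(a, b) \<in> top_part k"
    using ab(1) unfolding top_part_def by blast
  then show ?thesis
  proof cases
    case lower
    let ?E' = "insert (a + 1, b + 1) (E - {(a, b)})"
    have "excite_step lam E ?E'"
      using ab lower by (intro excite_stepI) auto
    moreover have "D' = top_part k \<union> ?E'"
      using D' lower top_part_disjoint[OF assms(1)] assms(2) by blast
    ultimately show ?thesis
      by blast
  next
    case row1
    then have b: "b = s - k" "k < s"
      using ab(3) by (auto simp: top_part_def)
    have "(1, s - k) \<notin> E"
      using assms(2) by (auto simp: lower_region_def)
    then have "D' = top_part (Suc k) \<union> E"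
      using D' row1 b top_part_Suc[OF b(2)] by auto
    with b show ?thesis
      by blast
  next
    case row2
    then have "i < b + 1"
      using assms(1) i_le_s by (auto simp: top_part_def)
    moreover have "b + 1 \<le> i"
      using lower_cell_column[OF ab(2)] row2 by simp
    ultimately have False
      by simp
    then show ?thesis ..
  qed
qed

lemma excited_decompose:
  assumes "D \<in> excited lam mu" and "i - 1 \<le> card {c \<in> D. fst c = 1}"
  shows "\<exists>k E. k \<le> s - i + 1 \<and> E \<in> lower_excited \<and> D = top_part k \<union> E"
  using assms unfolding excited_def mem_Collect_eq
proof (induction rule: rtranclp_induct)
  case base
  show ?case
    using diagram_mu_split by (intro exI[of _ 0] exI[of _ lower_mu]) (simp add: lower_excited_def)
next
  case (step D D')
  have "D \<subseteq> diagram lam"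
    using step.hyps(1) by (intro excited_subset_diagram[OF diagram_mu_subset]) (simp add: excited_def)
  then have "card {c \<in> D'. fst c = 1} \<le> card {c \<in> D. fst c = 1}"
    using step.hyps(2) by (intro excite_step_first_row_card_le)
  then have "i - 1 \<le> card {c \<in> D. fst c = 1}"
    using step.prems by linarith
  then obtain k E where kE: "k \<le> s - i + 1" "E \<in> lower_excited" "D = top_part k \<union> E"
    using step.IH by blast
  have E: "E \<subseteq> lower_region"
    using kE(2) by (rule lower_excited_subset)
  have "excite_step lam (top_part k \<union> E) D'"
    using step.hyps(2) kE(3) by simp
  with excite_step_from_top_part[OF kE(1) E]
  consider (lower) E' where "excite_step lam E E'" "D' = top_part k \<union> E'"
    | (top) "k < s" "D' = top_part (Suc k) \<union> E"
    by blast
  then show ?case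
  proof cases
    case lower
    then have "E' \<in> lower_excited"
      using kE(2) unfolding lower_excited_def by (auto intro: rtranclp.rtrancl_into_rtrancl)
    then show ?thesis
      using lower kE(1) by blast
  next
    case top
    then have "card {c \<in> D'. fst c = 1} = s - Suc k"
      using card_first_row_top_part[OF E] by simp
    then have "Suc k \<le> s - i + 1"
      using step.prems top(1) i_pos by linarith
    then show ?thesis
      using top kE(2) by blast
  qed
qed

lemma top_part_excited:
  assumes "k \<le> s - i + 1" and "E \<in> lower_excited"
  shows "top_part k \<union> E \<in> excited lam mu"
proof -
  have "(excite_step lam)\<^sup>*\<^sup>* (diagram mu) (top_part k \<union> lower_mu)"
    using assms(1)
  proof (induction k)
    case 0
    show ?case
      using diagram_mu_split by simp
  next
    case (Suc k)
    then have "(excite_step lam)\<^sup>*\<^sup>* (diagram mu) (top_part k \<union> lower_mu)"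
      by simp
    moreover have "excite_step lam (top_part k \<union> lower_mu) (top_part (Suc k) \<union> lower_mu)"
      using Suc.prems by (intro excite_step_top_part_Suc lower_mu_subset) simp
    ultimately show ?case
      by (rule rtranclp.rtrancl_into_rtrancl)
  qed
  moreover have "(excite_step lam)\<^sup>*\<^sup>* (top_part k \<union> lower_mu) (top_part k \<union> E)"
    using assms(2) unfolding lower_excited_def mem_Collect_eq
  proof (induction rule: rtranclp_induct)
    case (step E E')
    have "E \<subseteq> lower_region"
      using step.hyps(1) by (intro lower_excited_subset) (simp add: lower_excited_def)
    then have "excite_step lam (top_part k \<union> E) (top_part k \<union> E')"
      using assms(1) step.hyps(2) by (intro excite_step_top_part_lift)
    with step.IH show ?case
      by (rule rtranclp.rtrancl_into_rtrancl)
  qed simp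
  ultimately show ?thesis
    unfolding excited_def mem_Collect_eq by (rule rtranclp_trans)
qed

lemma excited_first_row_card_eq:
  assumes "j \<le> s - i + 1"
  shows "{D \<in> excited lam mu. card {c \<in> D. fst c = 1} = s - j} = (\<lambda>E. top_part j \<union> E) ` lower_excited"
proof (intro equalityI subsetI)
  fix D assume "D \<in> {D \<in> excited lam mu. card {c \<in> D. fst c = 1} = s - j}"
  then have D: "D \<in> excited lam mu" "card {c \<in> D. fst c = 1} = s - j"
    by simp_all
  then have "i - 1 \<le> card {c \<in> D. fst c = 1}"
    using assms i_le_s by linarith
  then obtain k E where kE: "k \<le> s - i + 1" "E \<in> lower_excited" "D = top_part k \<union> E"
    using excited_decompose[OF D(1)] by blast
  then have "s - k = s - j"
    using D(2) card_first_row_top_part[OF lower_excited_subset[OF kE(2)]] by simp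
  then have "k = j"
    using kE(1) assms i_pos i_le_s by linarith
  then show "D \<in> (\<lambda>E. top_part j \<union> E) ` lower_excited"
    using kE by blast
next
  fix D assume "D \<in> (\<lambda>E. top_part j \<union> E) ` lower_excited"
  then obtain E where E: "E \<in> lower_excited" "D = top_part j \<union> E"
    by blast
  then have "D \<in> excited lam mu" and "card {c \<in> D. fst c = 1} = s - j"
    using top_part_excited[OF assms] card_first_row_top_part[OF lower_excited_subset] by simp_all
  then show "D \<in> {D \<in> excited lam mu. card {c \<in> D. fst c = 1} = s - j}"
    by simp
qed

lemma hook_second_row:
  assumes "i < c" and "c \<le> s + 1"
  shows "hook lam (2, c) = s + 2 - c"
proof -
  have column: "a = 2" if "(a, c) \<in> diagram lam" and "2 \<le> a" for a
  proof (rule ccontr)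
    assume "a \<noteq> 2"
    then have "c \<le> i"
      using lower_cell_column[OF that(1)] that(2) by simp
    then show False
      using assms(1) by simp
  qed
  have "{(a, b) \<in> diagram lam. (a = 2 \<and> c \<le> b) \<or> (b = c \<and> 2 \<le> a)} = {2} \<times> {c..s + 1}"
    using column assms by (auto simp: second_row_cell simp del: mem_diagram_iff)
  then show ?thesis
    unfolding hook_def by (simp add: card_cartesian_product)
qed

lemma prod_hook_top_part:
  assumes "j \<le> s - i + 1"
  shows "(\<Prod>c \<in> {2} \<times> {s - j + 2..s + 1}. hook lam c) = fact j"
proof -
  have "(\<Prod>c \<in> {2} \<times> {s - j + 2..s + 1}. hook lam c) = (\<Prod>b = s - j + 2..s + 1. hook lam (2, b))"
    using prod.cartesian_product[of "\<lambda>a b. hook lam (a, b)" "{s - j + 2..s + 1}" "{2}"] by simp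
  also have "\<dots> = (\<Prod>b = s - j + 2..s + 1. s + 2 - b)"
  proof (rule prod.cong[OF refl])
    fix b assume "b \<in> {s - j + 2..s + 1}"
    then show "hook lam (2, b) = s + 2 - b"
      using assms i_le_s by (intro hook_second_row) auto
  qed
  also have "\<dots> = (\<Prod>b = (s + 1) - j + 1..s + 1. (s + 1) + 1 - b)"
    using assms i_pos i_le_s by (intro prod.cong) auto
  also have "\<dots> = fact j"
    using assms i_pos by (intro prod_reflect_eq_fact) linarith
  finally show ?thesis .
qed

lemma NN_coeff_eq:
  assumes j: "j \<le> s - i + 1"
  shows "NN_coeff lam mu j = fact j * (\<Sum>E \<in> lower_excited. \<Prod>c \<in> E. hook lam c)"
proof -
  let ?R = "{2} \<times> {s - j + 2..s + 1}"
  have "inj_on (\<lambda>E. top_part j \<union> E) lower_excited"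
    using top_part_disjoint[OF j] lower_excited_subset by (intro inj_onI) blast
  then have "NN_coeff lam mu j = (\<Sum>E \<in> lower_excited. \<Prod>c \<in> {c \<in> top_part j \<union> E. fst c \<noteq> 1}. hook lam c)"
    unfolding NN_coeff_def using first_row_length excited_first_row_card_eq[OF j]
    by (simp add: sum.reindex)
  also have "\<dots> = (\<Sum>E \<in> lower_excited. fact j * (\<Prod>c \<in> E. hook lam c))"
  proof (rule sum.cong)
    fix E assume "E \<in> lower_excited"
    then have E: "E \<subseteq> lower_region"
      by (rule lower_excited_subset)
    then have "finite E"
      using finite_lower_region by (rule finite_subset)
    moreover have "{c \<in> top_part j \<union> E. fst c \<noteq> 1} = ?R \<union> E" and "?R \<inter> E = {}"
      using E j i_le_s unfolding top_part_def lower_region_def by auto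
    ultimately show "(\<Prod>c \<in> {c \<in> top_part j \<union> E. fst c \<noteq> 1}. hook lam c) = fact j * (\<Prod>c \<in> E. hook lam c)"
      using prod_hook_top_part[OF j] by (simp add: prod.union_disjoint)
  qed simp
  finally show ?thesis
    by (simp add: sum_distrib_left)
qed

end

theorem proposition4p3:
  fixes I :: "nat set" and lam mu :: "nat list" and s i :: nat
  assumes "finite I" and "I \<noteq> {}" and "0 \<notin> I"
    and "is_lambda_I I lam"
    and "is_partition mu" and "diagram lam - diagram mu = border_cells lam"
    and "s = lam ! 0 - 1"
    and "1 \<le> i" and "i \<le> s"
    and "conj_part lam (i + 1) = 2" and "conj_part lam (s + 1) = 2"
  shows "\<forall>j k. j \<le> s - i + 1 \<and> k \<le> s - i + 1 \<longrightarrow>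
           real (NN_coeff lam mu j) / fact j = real (NN_coeff lam mu k) / fact k"
proof -
  have lam: "is_partition lam" "2 \<le> length lam" "lam ! 0 = lam ! 1"
    using assms(4) unfolding is_lambda_I_def by auto
  then have "0 < lam ! 0"
    using partition_nth_pos by simp
  then have "lam ! 0 = s + 1"
    using assms(7) by simp
  moreover have "diagram mu = diagram lam - border_cells lam"
    using lam assms(5,6) by (intro diagram_eq_diff_border_cells) auto
  ultimately interpret two_row_head lam mu s i
    using lam assms(8-10) by unfold_locales auto
  have "real (NN_coeff lam mu j) / fact j = (\<Sum>E \<in> lower_excited. \<Prod>c \<in> E. hook lam c)"
    if "j \<le> s - i + 1" for j
    using NN_coeff_eq[OF that] by simp
  then show ?thesis
    by simp
qed

end
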